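(* Let $A$ be an essential arrangement of affine hyperplanes in a real affine space $V$ and $f_0$ a non-constant affine-linear function on $V$, $H_0=\{f_0=0\}$. Let $\Delta$ be an unbounded domain of $A$ such that $tr(\Delta)$ is a bounded face at infinity with respect to $f_0$, and such that $f_0$ is unbounded on $\Delta\cap\{f_0>0\}$. Then $\Delta$ is a growing domain of $A$.
   Context: $A=\{H_i\}$ is a finite set of affine hyperplanes in $V$ having at least one point as an intersection of some of them (essential). Domains are the connected components of $V\setminus\bigcup H_i$, and faces are the connected components of $F\setminus\bigcup_{F\not\subset H_i}H_i$ for edges $F$ (nonempty intersections of the $H_i$). $\bar V=V\cup H_\infty$ is the projective completion, $\bar H$ the closure of $H$, and $\bar A=\{\bar H_i\}\cup\{H_\infty\}$, with faces defined likewise in $\bar V$. For an unbounded domain $\Delta$, $tr(\Delta)$ is the face of highest dimension among the faces of $\bar A$ lying in $H_\infty$ that are contained in $\bar\Delta\cap H_\infty$. A face $\Sigma\subset H_\infty$ of $\bar A$ is a bounded face at infinity if $\bar\Sigma\cap\bar H_0=\emptyset$. A domain is growing if it is unbounded and $f_0(x)\to+\infty$ as $x\to\infty$ within it. *)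

theory Defs
  imports "HOL-Analysis.Analysis"
begin

text \<open>A point at infinity of the
projective completion is a line through the origin of V (a direction up to nonzero scaling).
A subset of the hyperplane at infinity is represented by the cone in V - {0}
consisting of all nonzero vectors of the lines it contains.\<close>

definition hyperplane_arrangement :: "'a::euclidean_space set set \<Rightarrow> bool" where
  "hyperplane_arrangement A \<longleftrightarrow> finite A \<and>
     (\<forall>H\<in>A. \<exists>a b. a \<noteq> 0 \<and> H = {x. a \<bullet> x = b})"

definition essential :: "'a::euclidean_space set set \<Rightarrow> bool" where
  "essential A \<longleftrightarrow> (\<exists>S p. S \<subseteq> A \<and> \<Inter>S = {p})"

definition domain_of :: "'a::euclidean_space set set \<Rightarrow> 'a set \<Rightarrow> bool" where
  "domain_of A D \<longleftrightarrow> (\<exists>x. x \<notin> \<Union>A \<and> D = connected_component_set (- \<Union>A) x)"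

text \<open>Direction space of an affine set; for a hyperplane H, the points at infinity of its
projective closure are exactly the lines in dir H.\<close>
definition dir :: "'a::euclidean_space set \<Rightarrow> 'a set" where
  "dir H = {x - y | x y. x \<in> H \<and> y \<in> H}"

text \<open>Faces of the completed arrangement lying in H_inf: an edge lying in H_inf is
P(E) with E the intersection of the direction spaces of some subfamily S of A (S empty gives
H_inf itself); a face is a connected component (in projective space) of P(E) minus the
closures of the hyperplanes not containing it; as a cone, it is C \<union> -C with C a connected
component of E - {0} - (union of dir H with E not contained in dir H).\<close>
definition face_at_inf :: "'a::euclidean_space set set \<Rightarrow> 'a set \<Rightarrow> bool" where
  "face_at_inf A \<Sigma> \<longleftrightarrow> (\<exists>S x. S \<subseteq> A \<and>
     (let E = \<Inter>(dir ` S);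
          R = E - {0} - \<Union>{dir H | H. H \<in> A \<and> \<not> E \<subseteq> dir H}
      in x \<in> R \<and> \<Sigma> = connected_component_set R x \<union> uminus ` connected_component_set R x))"

text \<open>Projective dimension of a face at infinity represented as a cone.\<close>
definition face_dim :: "'a::euclidean_space set \<Rightarrow> int" where
  "face_dim \<Sigma> = aff_dim \<Sigma> - 1"

text \<open>Points at infinity in the projective closure of a subset S of V:
[0:v] is a limit of points [1:x_k] with x_k in S.\<close>
definition inf_closure :: "'a::euclidean_space set \<Rightarrow> 'a set" where
  "inf_closure S = {v. v \<noteq> 0 \<and> (\<exists>x::nat \<Rightarrow> 'a. (\<forall>k. x k \<in> S) \<and>
      filterlim (\<lambda>k. norm (x k)) at_top sequentially \<and>
      (((\<lambda>k. x k /\<^sub>R norm (x k)) \<longlonglongrightarrow> v /\<^sub>R norm v) \<or>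
       ((\<lambda>k. x k /\<^sub>R norm (x k)) \<longlonglongrightarrow> - (v /\<^sub>R norm v))))}"

text \<open>Projective closure of a subset of H_inf (given as a cone): [0:v] is a limit of
points [0:w_k] with w_k in the cone.\<close>
definition inf_set_closure :: "'a::euclidean_space set \<Rightarrow> 'a set" where
  "inf_set_closure \<Sigma> = {v. v \<noteq> 0 \<and> (\<exists>w::nat \<Rightarrow> 'a. (\<forall>k. w k \<in> \<Sigma> \<and> w k \<noteq> 0) \<and>
      (((\<lambda>k. w k /\<^sub>R norm (w k)) \<longlonglongrightarrow> v /\<^sub>R norm v) \<or>
       ((\<lambda>k. w k /\<^sub>R norm (w k)) \<longlonglongrightarrow> - (v /\<^sub>R norm v))))}"

text \<open>tr(D): the (unique) face of highest dimension among the faces at infinity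
contained in the closure of D at infinity.\<close>
definition is_tr :: "'a::euclidean_space set set \<Rightarrow> 'a set \<Rightarrow> 'a set \<Rightarrow> bool" where
  "is_tr A D \<Sigma> \<longleftrightarrow> face_at_inf A \<Sigma> \<and> \<Sigma> \<subseteq> inf_closure D \<and>
     (\<forall>\<Sigma>'. face_at_inf A \<Sigma>' \<and> \<Sigma>' \<subseteq> inf_closure D \<and> \<Sigma>' \<noteq> \<Sigma> \<longrightarrow> face_dim \<Sigma>' < face_dim \<Sigma>)"

text \<open>Bounded face at infinity w.r.t. f0: the closure of the face does not meet the closure
of H0 = {f0 = 0}, whose points at infinity are the lines in dir H0.\<close>
definition bounded_face_at_inf ::
    "'a::euclidean_space set set \<Rightarrow> ('a \<Rightarrow> real) \<Rightarrow> 'a set \<Rightarrow> bool" where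
  "bounded_face_at_inf A f0 \<Sigma> \<longleftrightarrow> face_at_inf A \<Sigma> \<and>
     inf_set_closure \<Sigma> \<inter> dir {x. f0 x = 0} = {}"

definition growing_domain ::
    "'a::euclidean_space set set \<Rightarrow> ('a \<Rightarrow> real) \<Rightarrow> 'a set \<Rightarrow> bool" where
  "growing_domain A f0 D \<longleftrightarrow> domain_of A D \<and> \<not> bounded D \<and>
     (\<forall>M. \<exists>R. \<forall>x\<in>D. norm x \<ge> R \<longrightarrow> f0 x \<ge> M)"

end

theory Submission
  imports Defs
begin

text \<open>After orienting the hyperplanes, the domain is the open polyhedron
\<open>{x. \<forall>H. a\<^sub>H \<bullet> x > b\<^sub>H}\<close>, and its points at infinity are the lines of its recession cone
\<open>C = {v. \<forall>H. a\<^sub>H \<bullet> v \<ge> 0}\<close>, which is pointed because the arrangement is essential.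
The face of highest dimension at infinity in the closure of the domain is the relative interior
of \<open>C\<close> (up to sign), and its closure contains \<open>C - {0}\<close>. So if \<open>tr(\<Delta>)\<close> is bounded,
\<open>a\<^sub>0 \<bullet> v \<noteq> 0\<close> on \<open>C - {0}\<close>, where \<open>f\<^sub>0 x = a\<^sub>0 \<bullet> x + c\<close>; since \<open>C\<close> is a pointed convex cone,
\<open>a\<^sub>0\<close> then has constant sign on \<open>C - {0}\<close>. Unboundedness of \<open>f\<^sub>0\<close> from above yields a
direction of \<open>C\<close> on which \<open>a\<^sub>0 \<ge> 0\<close>, hence \<open>a\<^sub>0 > 0\<close> on \<open>C - {0}\<close>; but a sequence escaping
to infinity in the domain with \<open>f\<^sub>0\<close> bounded above would yield a direction with \<open>a\<^sub>0 \<le> 0\<close>.\<close>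

lemma dir_hyperplane:
  fixes a :: "'a::euclidean_space"
  assumes "a \<noteq> 0"
  shows "dir {x. a \<bullet> x = b} = {v. a \<bullet> v = 0}"
proof
  show "dir {x. a \<bullet> x = b} \<subseteq> {v. a \<bullet> v = 0}"
    by (auto simp: dir_def inner_diff_right)
next
  show "{v. a \<bullet> v = 0} \<subseteq> dir {x. a \<bullet> x = b}"
  proof
    fix v assume v: "v \<in> {v. a \<bullet> v = 0}"
    define y where "y = (b / (a \<bullet> a)) *\<^sub>R a"
    have "a \<bullet> y = b" "a \<bullet> (y + v) = b"
      using assms v by (simp_all add: y_def inner_add_right)
    moreover have "v = (y + v) - y" by simp
    ultimately show "v \<in> dir {x. a \<bullet> x = b}"
      unfolding dir_def by blast
  qed
qed

lemma limit_direction_inner_nonneg: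
  fixes x :: "nat \<Rightarrow> 'a::real_inner"
  assumes bound: "\<And>k. \<beta> \<le> c \<bullet> x k"
    and lim: "filterlim (\<lambda>k. norm (x k)) at_top sequentially"
    and dir: "(\<lambda>k. x k /\<^sub>R norm (x k)) \<longlonglongrightarrow> w"
  shows "0 \<le> c \<bullet> w"
proof -
  have upper: "(\<lambda>k. c \<bullet> (x k /\<^sub>R norm (x k))) \<longlonglongrightarrow> c \<bullet> w"
    using dir by (intro tendsto_intros)
  have lower: "(\<lambda>k. \<beta> / norm (x k)) \<longlonglongrightarrow> 0"
    by (rule tendsto_divide_0[OF tendsto_const filterlim_at_top_imp_at_infinity[OF lim]])
  have "\<forall>\<^sub>F k in sequentially. \<beta> / norm (x k) \<le> c \<bullet> (x k /\<^sub>R norm (x k))"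
    using lim[unfolded filterlim_at_top_dense, THEN spec[of _ 0]]
  proof eventually_elim
    case (elim k)
    then show ?case using bound[of k] by (simp add: divide_right_mono divide_inverse_commute)
  qed
  then show ?thesis
    by (rule tendsto_le[OF trivial_limit_sequentially upper lower])
qed

lemma unbounded_seq_direction:
  fixes x :: "nat \<Rightarrow> 'a::euclidean_space"
  assumes "\<And>k. real (Suc k) \<le> norm (x k)"
  obtains r u where "norm u = 1" "filterlim (\<lambda>k. norm (x (r k))) at_top sequentially"
    "(\<lambda>k. x (r k) /\<^sub>R norm (x (r k))) \<longlonglongrightarrow> u"
proof -
  have "real k \<le> norm (x k)" for k
    using assms[of k] by simp
  then have "\<forall>\<^sub>F k in sequentially. real k \<le> norm (x k)"
    by (simp add: always_eventually)
  then have lim: "filterlim (\<lambda>k. norm (x k)) at_top sequentially"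
    by (rule filterlim_at_top_mono[OF filterlim_real_sequentially])
  have "0 < norm (x k)" for k
    using assms[of k] by (meson less_le_trans of_nat_0_less_iff zero_less_Suc)
  then have "\<forall>k. x k /\<^sub>R norm (x k) \<in> sphere 0 1"
    by simp
  then obtain u r where u: "u \<in> sphere 0 1" "strict_mono r"
    "((\<lambda>k. x k /\<^sub>R norm (x k)) \<circ> r) \<longlonglongrightarrow> u"
    by (rule seq_compactE[OF compact_imp_seq_compact[OF compact_sphere]])
  have "filterlim (\<lambda>k. norm (x (r k))) at_top sequentially"
    using filterlim_compose[OF lim filterlim_subseq[OF u(2)]] by (simp add: o_def)
  with u show thesis
    by (intro that[of u r]) (simp_all add: o_def)
qed

lemma ray_asymptotic_direction:
  fixes x0 v :: "'a::real_normed_vector"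
  assumes "v \<noteq> 0"
  shows "filterlim (\<lambda>k. norm (x0 + real (Suc k) *\<^sub>R v)) at_top sequentially"
    and "(\<lambda>k. (x0 + real (Suc k) *\<^sub>R v) /\<^sub>R norm (x0 + real (Suc k) *\<^sub>R v)) \<longlonglongrightarrow> v /\<^sub>R norm v"
proof -
  define w where "w = (\<lambda>k. inverse (real (Suc k)) *\<^sub>R x0 + v)"
  have ray: "x0 + real (Suc k) *\<^sub>R v = real (Suc k) *\<^sub>R w k" for k
    by (simp add: w_def scaleR_add_right)
  have w: "w \<longlonglongrightarrow> v"
    unfolding w_def
    using tendsto_add[OF tendsto_scaleR[OF LIMSEQ_inverse_real_of_nat tendsto_const] tendsto_const,
        of x0 v]
    by simp
  have Suc_lim: "filterlim (\<lambda>k. real (Suc k)) at_top sequentially"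
    by (rule filterlim_at_top_mono[OF filterlim_real_sequentially]) simp
  have "filterlim (\<lambda>k. norm (w k) * real (Suc k)) at_top sequentially"
    by (rule filterlim_tendsto_pos_mult_at_top[OF tendsto_norm[OF w] _ Suc_lim]) (use assms in simp)
  then show "filterlim (\<lambda>k. norm (x0 + real (Suc k) *\<^sub>R v)) at_top sequentially"
    unfolding ray by (simp add: mult.commute)
  have normalized: "(x0 + real (Suc k) *\<^sub>R v) /\<^sub>R norm (x0 + real (Suc k) *\<^sub>R v)
      = w k /\<^sub>R norm (w k)" for k
    using sgn_scaleR[of "real (Suc k)" "w k"] unfolding ray sgn_div_norm by (simp del: of_nat_Suc)
  have "(\<lambda>k. w k /\<^sub>R norm (w k)) \<longlonglongrightarrow> v /\<^sub>R norm v"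
    using assms by (intro tendsto_intros w) simp
  then show "(\<lambda>k. (x0 + real (Suc k) *\<^sub>R v) /\<^sub>R norm (x0 + real (Suc k) *\<^sub>R v))
      \<longlonglongrightarrow> v /\<^sub>R norm v"
    unfolding normalized .
qed

lemma inner_pos_on_pointed_cone:
  fixes c :: "'a::real_inner"
  assumes K: "convex_cone K" and pointed: "\<And>v. v \<in> K \<Longrightarrow> -v \<in> K \<Longrightarrow> v = 0"
    and nonzero: "\<And>z. z \<in> K \<Longrightarrow> z \<noteq> 0 \<Longrightarrow> c \<bullet> z \<noteq> 0"
    and u: "u \<in> K" "u \<noteq> 0" and v: "v \<in> K" "v \<noteq> 0" "0 \<le> c \<bullet> v"
  shows "0 < c \<bullet> u"
proof (rule ccontr)
  assume "\<not> 0 < c \<bullet> u"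
  then have cu: "c \<bullet> u < 0" using nonzero[OF u] by linarith
  have cv: "0 < c \<bullet> v" using nonzero[OF v(1,2)] v(3) by linarith
  define z where "z = (c \<bullet> v) *\<^sub>R u + (- (c \<bullet> u)) *\<^sub>R v"
  have "z \<in> K"
    unfolding z_def using u v cu cv
    by (intro convex_cone_add[OF K] convex_cone_scaleR[OF K]) auto
  moreover have "c \<bullet> z = 0"
    by (simp add: z_def inner_diff_right mult.commute)
  moreover have "z \<noteq> 0"
  proof
    assume "z = 0"
    then have eq: "(c \<bullet> v) *\<^sub>R u = (c \<bullet> u) *\<^sub>R v" by (simp add: z_def)
    have "u = inverse (c \<bullet> v) *\<^sub>R ((c \<bullet> v) *\<^sub>R u)" using cv by simp
    also have "\<dots> = (c \<bullet> u / (c \<bullet> v)) *\<^sub>R v" unfolding eq by (simp add: divide_inverse_commute)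
    finally have neg_u: "- u = (- (c \<bullet> u) / (c \<bullet> v)) *\<^sub>R v"
      by (metis minus_divide_left scaleR_minus_left)
    have "0 \<le> - (c \<bullet> u) / (c \<bullet> v)" using cu cv by (simp add: divide_neg_pos less_imp_le)
    then have "- u \<in> K" unfolding neg_u by (rule convex_cone_scaleR[OF K _ v(1)])
    then show False using pointed u by blast
  qed
  ultimately show False using nonzero by blast
qed

locale oriented_arrangement =
  fixes A :: "'a::euclidean_space set set" and a :: "'a set \<Rightarrow> 'a" and b :: "'a set \<Rightarrow> real"
  assumes finite_arrangement: "finite A"
    and normal_nonzero: "H \<in> A \<Longrightarrow> a H \<noteq> 0"
    and hyperplane_eq: "H \<in> A \<Longrightarrow> H = {x. a H \<bullet> x = b H}"
begin

definition cell :: "'a set"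
  where "cell = {x. \<forall>H\<in>A. b H < a H \<bullet> x}"

definition rec_cone :: "'a set"
  where "rec_cone = {v. \<forall>H\<in>A. 0 \<le> a H \<bullet> v}"

text \<open>\<open>implicit_eqs\<close> are the implicit equalities of the recession cone; \<open>implicit_space\<close> is
then its linear span and \<open>cone_relint\<close> its relative interior, so that the projectivisation of
\<open>cone_relint\<close> is the candidate for \<open>tr(\<Delta>)\<close>.\<close>

definition implicit_eqs :: "'a set set"
  where "implicit_eqs = {H\<in>A. \<forall>v\<in>rec_cone. a H \<bullet> v = 0}"

definition implicit_space :: "'a set"
  where "implicit_space = {v. \<forall>H\<in>implicit_eqs. a H \<bullet> v = 0}"

definition cone_relint :: "'a set"
  where "cone_relint = {v\<in>implicit_space. \<forall>H\<in>A - implicit_eqs. 0 < a H \<bullet> v}"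

lemma mem_hyperplane_iff:
  assumes "H \<in> A"
  shows "x \<in> H \<longleftrightarrow> a H \<bullet> x = b H"
proof -
  have "x \<in> H \<longleftrightarrow> x \<in> {x. a H \<bullet> x = b H}"
    by (rule arg_cong[where f = "\<lambda>S. x \<in> S", OF hyperplane_eq[OF assms]])
  then show ?thesis by simp
qed

lemma dir_eq:
  assumes "H \<in> A"
  shows "dir H = {v. a H \<bullet> v = 0}"
proof -
  have "dir H = dir {x. a H \<bullet> x = b H}"
    by (rule arg_cong[where f = dir, OF hyperplane_eq[OF assms]])
  also have "\<dots> = {v. a H \<bullet> v = 0}"
    by (rule dir_hyperplane[OF normal_nonzero[OF assms]])
  finally show ?thesis .
qed

lemma component_eq_cell:
  assumes x0: "x0 \<in> cell"
  shows "connected_component_set (- \<Union>A) x0 = cell"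
proof -
  have cell_subset: "cell \<subseteq> - \<Union>A"
  proof
    fix x assume x: "x \<in> cell"
    have "x \<notin> H" if "H \<in> A" for H
      using x that mem_hyperplane_iff[OF that] by (force simp: cell_def)
    then show "x \<in> - \<Union>A" by blast
  qed
  have "convex cell"
    unfolding cell_def by (simp add: Collect_ball_eq convex_INT convex_halfspace_gt)
  then have "cell \<subseteq> connected_component_set (- \<Union>A) x0"
    by (intro connected_component_maximal x0 convex_connected cell_subset)
  moreover have "connected_component_set (- \<Union>A) x0 \<subseteq> cell"
  proof
    fix y assume y: "y \<in> connected_component_set (- \<Union>A) x0"
    show "y \<in> cell" unfolding cell_def
    proof (rule ccontr)
      assume "y \<notin> {x. \<forall>H\<in>A. b H < a H \<bullet> x}"
      then obtain H where H: "H \<in> A" "a H \<bullet> y \<le> b H" by (auto simp: not_less)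
      have x0_comp: "x0 \<in> connected_component_set (- \<Union>A) x0"
        using x0 cell_subset by auto
      have "b H \<le> a H \<bullet> x0" using x0 H(1) by (simp add: cell_def less_imp_le)
      then obtain z where "z \<in> connected_component_set (- \<Union>A) x0" "a H \<bullet> z = b H"
        using connected_ivt_hyperplane[OF connected_connected_component y x0_comp H(2)] by blast
      then show False
        using connected_component_subset mem_hyperplane_iff[OF H(1)] H(1) by blast
    qed
  qed
  ultimately show ?thesis by blast
qed

lemma normals_orthogonal_eq_0:
  assumes "essential A" and orth: "\<And>H. H \<in> A \<Longrightarrow> a H \<bullet> v = 0"
  shows "v = 0"
proof -
  obtain S q where S: "S \<subseteq> A" "\<Inter>S = {q}"
    using assms(1) unfolding essential_def by blast
  have "q + v \<in> H" if "H \<in> S" for H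
  proof -
    have "H \<in> A" "q \<in> H" using S that by auto
    then show ?thesis using orth mem_hyperplane_iff[OF \<open>H \<in> A\<close>] by (simp add: inner_add_right)
  qed
  then have "q + v \<in> \<Inter>S" by blast
  then show "v = 0" using S by simp
qed

lemma rec_cone_pointed:
  assumes "essential A" "v \<in> rec_cone" "- v \<in> rec_cone"
  shows "v = 0"
proof (rule normals_orthogonal_eq_0[OF assms(1)])
  fix H assume "H \<in> A"
  then have "0 \<le> a H \<bullet> v" "0 \<le> a H \<bullet> (- v)"
    using assms(2,3) unfolding rec_cone_def by blast+
  then show "a H \<bullet> v = 0" by simp
qed

lemma convex_cone_rec_cone: "convex_cone rec_cone"
proof -
  have "rec_cone = \<Inter>((\<lambda>H. {v. 0 \<le> a H \<bullet> v}) ` A)"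
    by (auto simp: rec_cone_def)
  then show ?thesis
    by (auto intro!: convex_cone_Inter simp: convex_cone_halfspace_ge)
qed

lemma cell_add_rec_cone:
  assumes "x \<in> cell" "v \<in> rec_cone" "0 \<le> t"
  shows "x + t *\<^sub>R v \<in> cell"
  unfolding cell_def
proof (intro CollectI ballI)
  fix H assume "H \<in> A"
  then have "b H < a H \<bullet> x" "0 \<le> t * (a H \<bullet> v)"
    using assms by (auto simp: cell_def rec_cone_def)
  then show "b H < a H \<bullet> (x + t *\<^sub>R v)" by (simp add: inner_add_right)
qed

lemma limit_direction_in_rec_cone:
  assumes "\<And>k. x k \<in> cell" "filterlim (\<lambda>k. norm (x k)) at_top sequentially"
    and "(\<lambda>k. x k /\<^sub>R norm (x k)) \<longlonglongrightarrow> w"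
  shows "w \<in> rec_cone"
  unfolding rec_cone_def
proof (intro CollectI ballI)
  fix H assume "H \<in> A"
  then have "\<And>k. b H \<le> a H \<bullet> x k" using assms(1) by (force simp: cell_def less_imp_le)
  then show "0 \<le> a H \<bullet> w" using assms(2,3) by (rule limit_direction_inner_nonneg)
qed

lemma cell_asymptotic_direction:
  assumes "\<And>k. x k \<in> cell" "\<And>k. real (Suc k) \<le> norm (x k)" "\<And>k. \<beta> \<le> c \<bullet> x k"
  obtains u where "u \<in> rec_cone" "norm u = 1" "0 \<le> c \<bullet> u"
proof -
  obtain r u where u: "norm u = 1" "filterlim (\<lambda>k. norm (x (r k))) at_top sequentially"
    "(\<lambda>k. x (r k) /\<^sub>R norm (x (r k))) \<longlonglongrightarrow> u"
    using unbounded_seq_direction[OF assms(2)] by blast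
  have "u \<in> rec_cone" using assms(1) u(2,3) by (rule limit_direction_in_rec_cone)
  moreover have "0 \<le> c \<bullet> u" using assms(3) u(2,3) by (rule limit_direction_inner_nonneg)
  ultimately show thesis by (rule that[OF _ u(1)])
qed

lemma unbounded_above_direction:
  assumes "\<not> bdd_above ((\<lambda>x. c \<bullet> x) ` cell)"
  obtains u where "u \<in> rec_cone" "norm u = 1" "0 \<le> c \<bullet> u"
proof -
  have "\<forall>k. \<exists>y. y \<in> cell \<and> norm c * real (Suc k) < c \<bullet> y"
    using assms by (auto simp: bdd_above_def not_le)
  from choice[OF this] obtain y
    where y: "\<And>k. y k \<in> cell" "\<And>k. norm c * real (Suc k) < c \<bullet> y k"
    by blast
  have "norm c * real (Suc k) < norm c * norm (y k)" for k
    using y(2)[of k] norm_cauchy_schwarz[of c "y k"] by linarith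
  then have "real (Suc k) \<le> norm (y k)" for k
    by (meson less_imp_le mult_left_less_imp_less norm_ge_zero)
  moreover have "0 \<le> c \<bullet> y k" for k
  proof -
    have "0 \<le> norm c * real (Suc k)" by simp
    then show ?thesis using y(2)[of k] by linarith
  qed
  ultimately obtain u where "u \<in> rec_cone" "norm u = 1" "0 \<le> c \<bullet> u"
    by (rule cell_asymptotic_direction[OF y(1)])
  then show thesis by (rule that)
qed

lemma inf_closure_cell:
  assumes "x0 \<in> cell"
  shows "inf_closure cell = {v. v \<noteq> 0 \<and> (v \<in> rec_cone \<or> - v \<in> rec_cone)}"
proof
  show "inf_closure cell \<subseteq> {v. v \<noteq> 0 \<and> (v \<in> rec_cone \<or> - v \<in> rec_cone)}"
  proof
    fix v assume "v \<in> inf_closure cell"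
    then obtain x where x: "\<And>k. x k \<in> cell" "filterlim (\<lambda>k. norm (x k)) at_top sequentially"
      and v: "v \<noteq> 0" "((\<lambda>k. x k /\<^sub>R norm (x k)) \<longlonglongrightarrow> v /\<^sub>R norm v) \<or>
                       ((\<lambda>k. x k /\<^sub>R norm (x k)) \<longlonglongrightarrow> - (v /\<^sub>R norm v))"
      unfolding inf_closure_def by blast
    have "v /\<^sub>R norm v \<in> rec_cone \<or> - (v /\<^sub>R norm v) \<in> rec_cone"
      using v(2) limit_direction_in_rec_cone[OF x] by blast
    then have "norm v *\<^sub>R (v /\<^sub>R norm v) \<in> rec_cone \<or> norm v *\<^sub>R - (v /\<^sub>R norm v) \<in> rec_cone"
      using convex_cone_scaleR[OF convex_cone_rec_cone norm_ge_zero] by blast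
    then show "v \<in> {v. v \<noteq> 0 \<and> (v \<in> rec_cone \<or> - v \<in> rec_cone)}"
      using v(1) by simp
  qed
next
  show "{v. v \<noteq> 0 \<and> (v \<in> rec_cone \<or> - v \<in> rec_cone)} \<subseteq> inf_closure cell"
  proof
    fix v assume "v \<in> {v. v \<noteq> 0 \<and> (v \<in> rec_cone \<or> - v \<in> rec_cone)}"
    then obtain w where v: "v \<noteq> 0" and w: "w \<in> rec_cone" "w = v \<or> w = - v" "w \<noteq> 0"
      by auto
    define x where "x k = x0 + real (Suc k) *\<^sub>R w" for k
    have "x k \<in> cell" for k
      unfolding x_def using cell_add_rec_cone assms w(1) by simp
    moreover have "filterlim (\<lambda>k. norm (x k)) at_top sequentially"
      "(\<lambda>k. x k /\<^sub>R norm (x k)) \<longlonglongrightarrow> w /\<^sub>R norm w"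
      unfolding x_def using ray_asymptotic_direction[OF w(3)] by blast+
    moreover have "w /\<^sub>R norm w = v /\<^sub>R norm v \<or> w /\<^sub>R norm w = - (v /\<^sub>R norm v)"
      using w(2) by auto
    ultimately show "v \<in> inf_closure cell"
      unfolding inf_closure_def using v by (intro CollectI conjI exI[of _ x]) auto
  qed
qed

lemma rec_cone_subset_implicit_space: "rec_cone \<subseteq> implicit_space"
  by (auto simp: implicit_space_def implicit_eqs_def)

lemma implicit_eqs_subset: "implicit_eqs \<subseteq> A"
  by (auto simp: implicit_eqs_def)

lemma uminus_implicit_space: "v \<in> implicit_space \<Longrightarrow> - v \<in> implicit_space"
  by (simp add: implicit_space_def)

lemma implicit_space_eq: "implicit_space = \<Inter>(dir ` implicit_eqs)"
proof -
  have "dir H = {v. a H \<bullet> v = 0}" if "H \<in> implicit_eqs" for H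
    using that implicit_eqs_subset dir_eq by blast
  then show ?thesis by (auto simp: implicit_space_def)
qed

lemma cone_relint_eq:
  "cone_relint = implicit_space \<inter> (\<Inter>H\<in>A - implicit_eqs. {v. 0 < a H \<bullet> v})"
  by (auto simp: cone_relint_def)

lemma cone_relint_subset_rec_cone: "cone_relint \<subseteq> rec_cone"
proof
  fix v assume v: "v \<in> cone_relint"
  have "0 \<le> a H \<bullet> v" if "H \<in> A" for H
    using v that
    by (cases "H \<in> implicit_eqs") (auto simp: cone_relint_def implicit_space_def less_imp_le)
  then show "v \<in> rec_cone" by (simp add: rec_cone_def)
qed

lemma cone_relint_add_rec_cone:
  assumes "v \<in> cone_relint" "z \<in> rec_cone" "0 < t"
  shows "z + t *\<^sub>R v \<in> cone_relint"
proof -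
  have "z \<in> implicit_space" using assms(2) rec_cone_subset_implicit_space by blast
  then have "z + t *\<^sub>R v \<in> implicit_space"
    using assms(1) by (simp add: cone_relint_def implicit_space_def inner_add_right)
  moreover have "0 < a H \<bullet> (z + t *\<^sub>R v)" if "H \<in> A - implicit_eqs" for H
  proof -
    have "0 \<le> a H \<bullet> z" "0 < a H \<bullet> v"
      using assms(1,2) that by (auto simp: rec_cone_def cone_relint_def)
    then show ?thesis using assms(3) by (simp add: inner_add_right add_nonneg_pos)
  qed
  ultimately show ?thesis by (simp add: cone_relint_def)
qed

lemma cone_relint_nonempty:
  obtains v where "v \<in> cone_relint"
proof -
  have "\<forall>H\<in>A - implicit_eqs. \<exists>w. w \<in> rec_cone \<and> 0 < a H \<bullet> w"
  proof
    fix H assume H: "H \<in> A - implicit_eqs"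
    then obtain w where w: "w \<in> rec_cone" "a H \<bullet> w \<noteq> 0" by (auto simp: implicit_eqs_def)
    moreover have "0 \<le> a H \<bullet> w" using w(1) H by (simp add: rec_cone_def)
    ultimately show "\<exists>w. w \<in> rec_cone \<and> 0 < a H \<bullet> w" by force
  qed
  from bchoice[OF this] obtain w
    where w: "\<forall>H\<in>A - implicit_eqs. w H \<in> rec_cone \<and> 0 < a H \<bullet> w H"
    by blast
  define v where "v = (\<Sum>H\<in>A - implicit_eqs. w H)"
  have "v \<in> rec_cone"
    unfolding v_def using w by (auto simp: rec_cone_def inner_sum_right intro!: sum_nonneg)
  moreover have "0 < a H \<bullet> v" if H: "H \<in> A - implicit_eqs" for H
  proof -
    have "0 < a H \<bullet> w H" using w H by blast
    also have "\<dots> \<le> (\<Sum>H'\<in>A - implicit_eqs. a H \<bullet> w H')"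
      using w H finite_arrangement by (intro member_le_sum) (auto simp: rec_cone_def)
    finally show ?thesis by (simp add: v_def inner_sum_right)
  qed
  ultimately have "v \<in> cone_relint"
    using rec_cone_subset_implicit_space by (auto simp: cone_relint_def)
  then show thesis by (rule that)
qed

lemma implicit_eqs_proper:
  assumes "essential A" "u \<in> rec_cone" "u \<noteq> 0"
  shows "implicit_eqs \<noteq> A"
proof
  assume "implicit_eqs = A"
  then have "a H \<bullet> u = 0" if "H \<in> A" for H
    using that assms(2) unfolding implicit_eqs_def by blast
  then show False using normals_orthogonal_eq_0[OF assms(1)] assms(3) by blast
qed

lemma zero_notin_cone_relint: "implicit_eqs \<noteq> A \<Longrightarrow> 0 \<notin> cone_relint"
  using implicit_eqs_subset by (auto simp: cone_relint_def)

lemma implicit_space_subset_dir_iff: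
  assumes "H \<in> A"
  shows "implicit_space \<subseteq> dir H \<longleftrightarrow> H \<in> implicit_eqs"
proof
  assume sub: "implicit_space \<subseteq> dir H"
  obtain v where v: "v \<in> cone_relint" by (rule cone_relint_nonempty)
  then have "a H \<bullet> v = 0"
    using sub dir_eq[OF assms] by (auto simp: cone_relint_def)
  show "H \<in> implicit_eqs"
  proof (rule ccontr)
    assume "H \<notin> implicit_eqs"
    then have "0 < a H \<bullet> v" using v assms by (simp add: cone_relint_def)
    then show False using \<open>a H \<bullet> v = 0\<close> by simp
  qed
qed (auto simp: implicit_space_def dir_eq[OF assms])

lemma convex_implicit_space: "convex implicit_space"
  unfolding implicit_space_def Collect_ball_eq by (intro convex_INT) (simp add: convex_hyperplane)

lemma convex_cone_relint: "convex cone_relint"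
  unfolding cone_relint_eq
  by (intro convex_Int convex_implicit_space convex_INT) (simp add: convex_halfspace_gt)

definition edge_minus_hyperplanes :: "'a set"
  where "edge_minus_hyperplanes =
    implicit_space - {0} - \<Union>{dir H | H. H \<in> A \<and> \<not> implicit_space \<subseteq> dir H}"

lemma cone_relint_subset_edge_minus_hyperplanes:
  assumes "implicit_eqs \<noteq> A"
  shows "cone_relint \<subseteq> edge_minus_hyperplanes"
proof
  fix w assume w: "w \<in> cone_relint"
  have "w \<notin> dir H" if H: "H \<in> A" "\<not> implicit_space \<subseteq> dir H" for H
  proof -
    have "0 < a H \<bullet> w"
      using w H implicit_space_subset_dir_iff by (simp add: cone_relint_def)
    then show ?thesis using dir_eq[OF H(1)] by simp
  qed
  moreover have "w \<in> implicit_space" "w \<noteq> 0"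
    using w zero_notin_cone_relint[OF assms] by (auto simp: cone_relint_def)
  ultimately show "w \<in> edge_minus_hyperplanes" by (auto simp: edge_minus_hyperplanes_def)
qed

lemma connected_component_cone_relint:
  assumes v: "v \<in> cone_relint" and proper: "implicit_eqs \<noteq> A"
  shows "connected_component_set edge_minus_hyperplanes v = cone_relint"
    (is "connected_component_set ?R v = _")
proof
  show "cone_relint \<subseteq> connected_component_set ?R v"
    by (intro connected_component_maximal v convex_connected convex_cone_relint
        cone_relint_subset_edge_minus_hyperplanes proper)
next
  show "connected_component_set ?R v \<subseteq> cone_relint"
  proof
    fix w assume w: "w \<in> connected_component_set ?R v"
    have comp_R: "connected_component_set ?R v \<subseteq> ?R"
      by (rule connected_component_subset)
    have v_comp: "v \<in> connected_component_set ?R v"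
      using cone_relint_subset_edge_minus_hyperplanes[OF proper] v by (simp add: subsetD)
    have "w \<in> implicit_space" using w comp_R by (auto simp: edge_minus_hyperplanes_def)
    moreover have "0 < a H \<bullet> w" if H: "H \<in> A - implicit_eqs" for H
    proof (rule ccontr)
      assume "\<not> 0 < a H \<bullet> w"
      moreover have "0 \<le> a H \<bullet> v" using v H by (simp add: cone_relint_def less_imp_le)
      ultimately obtain z where z: "z \<in> connected_component_set ?R v" "a H \<bullet> z = 0"
        using connected_ivt_hyperplane[OF connected_connected_component w v_comp, of "a H" 0]
        by force
      have "\<not> implicit_space \<subseteq> dir H" using H implicit_space_subset_dir_iff by blast
      moreover have "z \<in> dir H" using z(2) dir_eq H by blast
      ultimately have "z \<notin> ?R" using H by (auto simp: edge_minus_hyperplanes_def)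
      then show False using z(1) comp_R by blast
    qed
    ultimately show "w \<in> cone_relint" by (simp add: cone_relint_def)
  qed
qed

lemma face_at_inf_cone_relint:
  assumes "implicit_eqs \<noteq> A"
  shows "face_at_inf A (cone_relint \<union> uminus ` cone_relint)"
proof -
  obtain v where v: "v \<in> cone_relint" by (rule cone_relint_nonempty)
  have "v \<in> edge_minus_hyperplanes"
    using cone_relint_subset_edge_minus_hyperplanes[OF assms] v by blast
  then show ?thesis
    using connected_component_cone_relint[OF v assms]
    unfolding face_at_inf_def Let_def edge_minus_hyperplanes_def implicit_space_eq
    by (intro exI[of _ implicit_eqs] exI[of _ v] conjI implicit_eqs_subset) simp_all
qed

lemma aff_dim_cone_relint: "aff_dim cone_relint = aff_dim implicit_space"
proof -
  let ?O = "\<Inter>H\<in>A - implicit_eqs. {v. 0 < a H \<bullet> v}"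
  have "open ?O"
    using finite_arrangement by (intro open_INT) (auto simp: open_halfspace_gt)
  moreover obtain v where "v \<in> cone_relint" by (rule cone_relint_nonempty)
  then have "implicit_space \<inter> ?O \<noteq> {}" unfolding cone_relint_eq by blast
  ultimately have "affine hull cone_relint = affine hull implicit_space"
    unfolding cone_relint_eq by (rule affine_hull_convex_Int_open[OF convex_implicit_space])
  then show ?thesis by (rule aff_dim_affine_hull2)
qed

lemma is_tr_cell_eq:
  assumes x0: "x0 \<in> cell" and proper: "implicit_eqs \<noteq> A" and tr: "is_tr A cell \<Sigma>"
  shows "\<Sigma> = cone_relint \<union> uminus ` cone_relint"
proof (rule ccontr)
  let ?F = "cone_relint \<union> uminus ` cone_relint"
  assume "\<Sigma> \<noteq> ?F"
  moreover have "?F \<subseteq> inf_closure cell"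
    using cone_relint_subset_rec_cone zero_notin_cone_relint[OF proper]
    unfolding inf_closure_cell[OF x0] by auto
  ultimately have "face_dim ?F < face_dim \<Sigma>"
    using tr face_at_inf_cone_relint[OF proper] unfolding is_tr_def by blast
  then have "aff_dim ?F < aff_dim \<Sigma>" by (simp add: face_dim_def)
  moreover have "\<Sigma> \<subseteq> implicit_space"
    using tr rec_cone_subset_implicit_space uminus_implicit_space
    unfolding is_tr_def inf_closure_cell[OF x0] by fastforce
  then have "aff_dim \<Sigma> \<le> aff_dim cone_relint"
    unfolding aff_dim_cone_relint by (rule aff_dim_subset)
  moreover have "aff_dim cone_relint \<le> aff_dim ?F" by (rule aff_dim_subset) blast
  ultimately show False by simp
qed

lemma rec_cone_subset_inf_set_closure:
  assumes proper: "implicit_eqs \<noteq> A" and z: "z \<in> rec_cone" "z \<noteq> 0"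
  shows "z \<in> inf_set_closure (cone_relint \<union> uminus ` cone_relint)"
proof -
  obtain v where v: "v \<in> cone_relint" by (rule cone_relint_nonempty)
  define w where "w k = z + inverse (real (Suc k)) *\<^sub>R v" for k
  have "w k \<in> cone_relint" for k
    unfolding w_def by (rule cone_relint_add_rec_cone[OF v z(1)]) simp
  then have "\<forall>k. w k \<in> cone_relint \<union> uminus ` cone_relint \<and> w k \<noteq> 0"
    using zero_notin_cone_relint[OF proper] by (metis UnI1)
  moreover have "w \<longlonglongrightarrow> z"
    unfolding w_def
    using tendsto_add[OF tendsto_const tendsto_scaleR[OF LIMSEQ_inverse_real_of_nat tendsto_const],
        of z v]
    by simp
  then have "(\<lambda>k. w k /\<^sub>R norm (w k)) \<longlonglongrightarrow> z /\<^sub>R norm z"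
    using z(2) by (intro tendsto_intros) auto
  ultimately show ?thesis
    unfolding inf_set_closure_def using z(2) by blast
qed

lemma bounded_tr_inner_nonzero:
  assumes "essential A" "x0 \<in> cell" "is_tr A cell \<Sigma>"
    and "inf_set_closure \<Sigma> \<inter> {v. c \<bullet> v = 0} = {}"
    and "z \<in> rec_cone" "z \<noteq> 0"
  shows "c \<bullet> z \<noteq> 0"
proof -
  have "implicit_eqs \<noteq> A" using implicit_eqs_proper assms(1,5,6) .
  then have "z \<in> inf_set_closure \<Sigma>"
    using is_tr_cell_eq[OF assms(2) _ assms(3)] rec_cone_subset_inf_set_closure assms(5,6) by simp
  then show ?thesis using assms(4) by blast
qed

lemma inner_grows_on_cell:
  assumes "essential A"
    and nonzero: "\<And>z. z \<in> rec_cone \<Longrightarrow> z \<noteq> 0 \<Longrightarrow> c \<bullet> z \<noteq> 0"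
    and u: "u \<in> rec_cone" "norm u = 1" "0 \<le> c \<bullet> u"
  shows "\<exists>R. \<forall>x\<in>cell. R \<le> norm x \<longrightarrow> M \<le> c \<bullet> x"
proof (rule ccontr)
  assume "\<not> ?thesis"
  then have "\<forall>k. \<exists>x. x \<in> cell \<and> real (Suc k) \<le> norm x \<and> c \<bullet> x < M"
    by (auto simp: not_le)
  from choice[OF this] obtain x
    where "\<forall>k. x k \<in> cell \<and> real (Suc k) \<le> norm (x k) \<and> c \<bullet> x k < M"
    by blast
  then have x: "\<And>k. x k \<in> cell" "\<And>k. real (Suc k) \<le> norm (x k)"
    "\<And>k. - M \<le> (- c) \<bullet> x k"
    by (auto simp: less_imp_le)
  obtain v where v: "v \<in> rec_cone" "norm v = 1" "0 \<le> (- c) \<bullet> v"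
    by (rule cell_asymptotic_direction[OF x])
  have "0 < c \<bullet> v"
    using u v
    by (intro inner_pos_on_pointed_cone[OF convex_cone_rec_cone rec_cone_pointed[OF assms(1)] nonzero])
      auto
  then show False using v(3) by simp
qed

lemma affine_grows_on_cell:
  assumes "essential A" "x0 \<in> cell" "is_tr A cell \<Sigma>" "bounded_face_at_inf A f0 \<Sigma>"
    and f0: "\<And>x. f0 x = c \<bullet> x + c0" and "c \<noteq> 0"
    and unbounded: "\<not> bdd_above (f0 ` (cell \<inter> {x. f0 x > 0}))"
  shows "\<exists>R. \<forall>x\<in>cell. R \<le> norm x \<longrightarrow> M \<le> f0 x"
proof -
  have "{x. f0 x = 0} = {x. c \<bullet> x = - c0}" using f0 by (auto simp: add_eq_0_iff2)
  then have "inf_set_closure \<Sigma> \<inter> {v. c \<bullet> v = 0} = {}"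
    using assms(4) dir_hyperplane[OF assms(6)] by (simp add: bounded_face_at_inf_def)
  then have nonzero: "c \<bullet> z \<noteq> 0" if "z \<in> rec_cone" "z \<noteq> 0" for z
    using bounded_tr_inner_nonzero[OF assms(1-3) _ that] by blast
  have "\<not> bdd_above ((\<lambda>x. c \<bullet> x) ` cell)"
  proof
    assume "bdd_above ((\<lambda>x. c \<bullet> x) ` cell)"
    then obtain B where "\<And>x. x \<in> cell \<Longrightarrow> c \<bullet> x \<le> B" by (auto simp: bdd_above_def)
    then have "bdd_above (f0 ` (cell \<inter> {x. f0 x > 0}))"
      using f0 by (intro bdd_aboveI[of _ "B + c0"]) auto
    then show False using unbounded by blast
  qed
  then obtain u where u: "u \<in> rec_cone" "norm u = 1" "0 \<le> c \<bullet> u"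
    by (rule unbounded_above_direction)
  obtain R where "\<forall>x\<in>cell. R \<le> norm x \<longrightarrow> M - c0 \<le> c \<bullet> x"
    using inner_grows_on_cell[OF assms(1) nonzero u] by blast
  then show ?thesis using f0 by (auto simp: diff_le_eq)
qed

end

lemma hyperplane_arrangement_orientation:
  assumes "hyperplane_arrangement A" "x0 \<notin> \<Union>A"
  obtains a b where "oriented_arrangement A a b" "x0 \<in> oriented_arrangement.cell A a b"
proof -
  have "\<forall>H\<in>A. \<exists>n. fst n \<noteq> 0 \<and> H = {x. fst n \<bullet> x = snd n} \<and> snd n < fst n \<bullet> x0"
  proof
    fix H assume H: "H \<in> A"
    then obtain a b where ab: "a \<noteq> 0" "H = {x. a \<bullet> x = b}"
      using assms(1) unfolding hyperplane_arrangement_def by blast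
    then have "a \<bullet> x0 \<noteq> b" using assms(2) H by blast
    then consider "b < a \<bullet> x0" | "- b < (- a) \<bullet> x0" by fastforce
    then show "\<exists>n. fst n \<noteq> 0 \<and> H = {x. fst n \<bullet> x = snd n} \<and> snd n < fst n \<bullet> x0"
    proof cases
      case 1
      then show ?thesis using ab by (intro exI[of _ "(a, b)"]) simp
    next
      case 2
      moreover have "H = {x. (- a) \<bullet> x = - b}" using ab(2) by auto
      ultimately show ?thesis using ab(1) by (intro exI[of _ "(- a, - b)"]) simp
    qed
  qed
  from bchoice[OF this] obtain n where n: "\<forall>H\<in>A.
      fst (n H) \<noteq> 0 \<and> H = {x. fst (n H) \<bullet> x = snd (n H)} \<and> snd (n H) < fst (n H) \<bullet> x0"
    by blast
  have "oriented_arrangement A (\<lambda>H. fst (n H)) (\<lambda>H. snd (n H))"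
    using assms(1) n by unfold_locales (auto simp: hyperplane_arrangement_def)
  moreover have "x0 \<in> oriented_arrangement.cell A (\<lambda>H. fst (n H)) (\<lambda>H. snd (n H))"
    using n by (simp add: oriented_arrangement.cell_def[OF calculation])
  ultimately show thesis by (rule that)
qed

theorem lemma3:
  fixes A :: "'a::euclidean_space set set" and f0 :: "'a \<Rightarrow> real" and D :: "'a set"
  assumes "hyperplane_arrangement A" and "essential A"
    and "\<exists>a0 c. a0 \<noteq> 0 \<and> (\<forall>x. f0 x = a0 \<bullet> x + c)"
    and "domain_of A D" and "\<not> bounded D"
    and "\<exists>\<Sigma>. is_tr A D \<Sigma> \<and> bounded_face_at_inf A f0 \<Sigma>"
    and "\<not> bdd_above (f0 ` (D \<inter> {x. f0 x > 0}))"
  shows "growing_domain A f0 D"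
proof -
  obtain a0 c0 where a0: "a0 \<noteq> 0" and f0: "\<And>x. f0 x = a0 \<bullet> x + c0"
    using assms(3) by blast
  obtain x0 where x0: "x0 \<notin> \<Union>A" and D: "D = connected_component_set (- \<Union>A) x0"
    using assms(4) unfolding domain_of_def by blast
  obtain a b where "oriented_arrangement A a b" and x0_cell: "x0 \<in> oriented_arrangement.cell A a b"
    by (rule hyperplane_arrangement_orientation[OF assms(1) x0])
  then interpret oriented_arrangement A a b by simp
  have D_cell: "D = cell" using D component_eq_cell[OF x0_cell] by simp
  obtain \<Sigma> where "is_tr A cell \<Sigma>" "bounded_face_at_inf A f0 \<Sigma>"
    using assms(6) D_cell by blast
  then have "\<exists>R. \<forall>x\<in>D. R \<le> norm x \<longrightarrow> M \<le> f0 x" for M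
    unfolding D_cell
    by (rule affine_grows_on_cell[OF assms(2) x0_cell _ _ f0 a0 assms(7)[unfolded D_cell]])
  then show ?thesis using assms(4,5) unfolding growing_domain_def by blast
qed

end
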